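(* Let $\mathcal H$ be the Hilbert space of $n$ qubits. Let $\mathsf H_0=\{|\Psi\rangle\langle\Psi| : |\Psi\rangle=|\phi\rangle\otimes|\psi\rangle,\ |\phi\rangle,|\psi\rangle\in\mathcal H\text{ unit vectors}\}$ and, for $\varepsilon\ge0$, $\mathsf H_1^{\varepsilon}=\{|\Psi\rangle\langle\Psi| : |\Psi\rangle\in\mathcal H^{\otimes2},\ \max_{|\phi\rangle,|\psi\rangle\in\mathcal H}F(|\Psi\rangle\langle\Psi|,|\phi\rangle\langle\phi|\otimes|\psi\rangle\langle\psi|)\le1-\varepsilon\}$. Then for every $0\le\varepsilon\le 1-2^{-n/2}$ and every POVM $\{M_0,M_1\}$ on $\mathcal H^{\otimes2}$, $$\sup_{\rho\in\mathsf H_0}\operatorname{tr}(M_1\rho)+\sup_{\rho\in\mathsf H_1^{\varepsilon}}\operatorname{tr}(M_0\rho)\ \ge\ 1,$$ i.e., no measurement distinguishes $\mathsf H_0$ from $\mathsf H_1^\varepsilon$ better than guessing at random.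
   Context: The fidelity of density operators is $F(\rho,\sigma)=\operatorname{tr}\sqrt{\sqrt\rho\,\sigma\sqrt\rho}$; for pure states $F(|a\rangle\langle a|,|b\rangle\langle b|)=|\langle a|b\rangle|$. A POVM $\{M_0,M_1\}$ is a pair of positive semidefinite operators with $M_0+M_1=I$; outcome $i$ (meaning "the state is in the $i$th set") occurs with probability $\operatorname{tr}(M_i\rho)$. *)

theory Defs
  imports "Jordan_Normal_Form.Matrix" "Jordan_Normal_Form.Schur_Decomposition"
begin

definition qdim :: "nat \<Rightarrow> nat" where
  "qdim n = 2 ^ n"

definition unit_vec_in :: "nat \<Rightarrow> complex vec \<Rightarrow> bool" where
  "unit_vec_in d v \<longleftrightarrow> v \<in> carrier_vec d \<and> v \<bullet>c v = 1"

(* tensor product of vectors: C^d (x) C^e = C^(d*e), index (i,j) |-> i*e + j *)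
definition tensor_vec :: "complex vec \<Rightarrow> complex vec \<Rightarrow> complex vec" where
  "tensor_vec a b = vec (dim_vec a * dim_vec b)
      (\<lambda>k. a $ (k div dim_vec b) * b $ (k mod dim_vec b))"

definition tensor_mat :: "complex mat \<Rightarrow> complex mat \<Rightarrow> complex mat" where
  "tensor_mat A B = mat (dim_row A * dim_row B) (dim_col A * dim_col B)
      (\<lambda>(i,j). A $$ (i div dim_row B, j div dim_col B) * B $$ (i mod dim_row B, j mod dim_col B))"

definition proj :: "complex vec \<Rightarrow> complex mat" where
  "proj v = mat (dim_vec v) (dim_vec v) (\<lambda>(i,j). v $ i * cnj (v $ j))"

definition mtrace :: "complex mat \<Rightarrow> complex" where
  "mtrace A = (\<Sum>i<dim_row A. A $$ (i,i))"

definition psd :: "nat \<Rightarrow> complex mat \<Rightarrow> bool" where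
  "psd d M \<longleftrightarrow> M \<in> carrier_mat d d \<and> mat_adjoint M = M \<and>
     (\<forall>v \<in> carrier_vec d. Im ((M *\<^sub>v v) \<bullet>c v) = 0 \<and> Re ((M *\<^sub>v v) \<bullet>c v) \<ge> 0)"

definition povm2 :: "nat \<Rightarrow> complex mat \<Rightarrow> complex mat \<Rightarrow> bool" where
  "povm2 d M0 M1 \<longleftrightarrow> psd d M0 \<and> psd d M1 \<and> M0 + M1 = 1\<^sub>m d"

(* probability of outcome M on state rho: tr(M rho) (real for psd M and density rho) *)
definition prob :: "complex mat \<Rightarrow> complex mat \<Rightarrow> real" where
  "prob M \<rho> = Re (mtrace (M * \<rho>))"

(* fidelity of pure states: F(|a><a|,|b><b|) = |<a|b>| *)
definition pure_fidelity :: "complex vec \<Rightarrow> complex vec \<Rightarrow> real" where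
  "pure_fidelity a b = cmod (b \<bullet>c a)"

definition H0 :: "nat \<Rightarrow> complex mat set" where
  "H0 n = {proj (tensor_vec \<phi> \<psi>) | \<phi> \<psi>. unit_vec_in (qdim n) \<phi> \<and> unit_vec_in (qdim n) \<psi>}"

(* max over unit phi, psi of F(|Psi><Psi|, |phi><phi| (x) |psi><psi|);
   note |phi><phi| (x) |psi><psi| = |phi (x) psi><phi (x) psi| *)
definition max_prod_fidelity :: "nat \<Rightarrow> complex vec \<Rightarrow> real" where
  "max_prod_fidelity n \<Psi> = Sup {pure_fidelity \<Psi> (tensor_vec \<phi> \<psi>) | \<phi> \<psi>.
       unit_vec_in (qdim n) \<phi> \<and> unit_vec_in (qdim n) \<psi>}"

definition H1 :: "nat \<Rightarrow> real \<Rightarrow> complex mat set" where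
  "H1 n \<epsilon> = {proj \<Psi> | \<Psi>. unit_vec_in (qdim n * qdim n) \<Psi> \<and>
       max_prod_fidelity n \<Psi> \<le> 1 - \<epsilon>}"

end

theory Submission
  imports Defs
begin

(* With d = 2^n, the basis product states |i>|i> lie in H_0, so each diagonal entry
   <ii|M_0|ii> is at least 1 - A, where A is the first supremum. A state
   Psi = d^(-1/2) sum_i s_i |i>|i> with signs s_i = +-1 has overlap at most 1/sqrt d = 2^(-n/2)
   with every product state, hence lies in H_1^eps. Averaged over all sign vectors,
   <Psi|M_0|Psi> equals (1/d) sum_i <ii|M_0|ii> >= 1 - A, so some choice of signs
   (found greedily) gives a state of H_1^eps with tr(M_0 Psi) >= 1 - A. *)

lemma pair_index_less:
  fixes i j a b :: nat
  assumes "i < a" "j < b"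
  shows "i*b + j < a*b"
proof -
  have "i*b + j < (i+1)*b" using assms(2) by simp
  also have "\<dots> \<le> a*b" using assms(1) by (intro mult_right_mono) auto
  finally show ?thesis .
qed

lemma pair_index_div_mod: "j < b \<Longrightarrow> (i*b+j) div b = (i::nat)" "j < b \<Longrightarrow> (i*b+j) mod b = j"
  by simp_all

lemma sum_lessThan_mult_pairs:
  fixes f :: "nat \<Rightarrow> 'a::comm_monoid_add"
  shows "(\<Sum>k<a*b. f k) = (\<Sum>i<a. \<Sum>j<b. f (i*b+j))"
proof -
  have "(\<Sum>k<a*b. f k) = (\<Sum>i<a. sum f {i*b..<i*b+b})"
    by (rule sum.nat_group[symmetric])
  also have "\<dots> = (\<Sum>i<a. \<Sum>j<b. f (i*b+j))"
    by (simp add: sum.atLeastLessThan_shift_0 atLeast0LessThan)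
  finally show ?thesis .
qed

lemma sum_lessThan_square_diag:
  fixes f :: "nat \<Rightarrow> 'a::comm_monoid_add"
  assumes "\<And>i j. i < d \<Longrightarrow> j < d \<Longrightarrow> i \<noteq> j \<Longrightarrow> f (i*d+j) = 0"
  shows "(\<Sum>k<d*d. f k) = (\<Sum>i<d. f (i*d+i))"
  unfolding sum_lessThan_mult_pairs
  by (intro sum.cong refl) (use assms in \<open>auto intro: sum.neutral simp: sum.remove\<close>)

(* diag_vec d a is the vector sum_i a i |i>|i>, indexed as in tensor_vec. *)
definition diag_vec :: "nat \<Rightarrow> (nat \<Rightarrow> complex) \<Rightarrow> complex vec" where
  "diag_vec d a = vec (d*d) (\<lambda>k. if k div d = k mod d then a (k div d) else 0)"

lemma diag_vec_carrier [simp]: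
  "diag_vec d a \<in> carrier_vec (d*d)" "dim_vec (diag_vec d a) = d*d"
  by (simp_all add: diag_vec_def)

lemma index_diag_vec_pair:
  "i < d \<Longrightarrow> j < d \<Longrightarrow> diag_vec d a $ (i*d+j) = (if i = j then a i else 0)"
  by (simp add: diag_vec_def pair_index_less)

lemma scalar_prod_diag_vec:
  assumes "v \<in> carrier_vec (d*d)"
  shows "v \<bullet> diag_vec d a = (\<Sum>i<d. v $ (i*d+i) * a i)"
  using assms unfolding scalar_prod_def
  by (simp add: atLeast0LessThan sum_lessThan_square_diag index_diag_vec_pair)

lemma cscalar_prod_diag_vec:
  assumes "v \<in> carrier_vec (d*d)"
  shows "v \<bullet>c diag_vec d a = (\<Sum>i<d. v $ (i*d+i) * cnj (a i))"
  using assms unfolding scalar_prod_def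
  by (simp add: atLeast0LessThan sum_lessThan_square_diag index_diag_vec_pair)

lemma quadratic_form_diag_vec:
  assumes "M \<in> carrier_mat (d*d) (d*d)"
  shows "(M *\<^sub>v diag_vec d a) \<bullet>c diag_vec d a =
    (\<Sum>i<d. \<Sum>j<d. M $$ (i*d+i, j*d+j) * a j * cnj (a i))"
proof -
  have "(M *\<^sub>v diag_vec d a) $ (i*d+i) = (\<Sum>j<d. M $$ (i*d+i, j*d+j) * a j)" if "i < d" for i
    using assms that pair_index_less[OF that that]
    by (simp add: scalar_prod_diag_vec[OF row_carrier_vec[OF _ assms]] pair_index_less)
  then show ?thesis
    using assms by (simp add: cscalar_prod_diag_vec sum_distrib_right)
qed

lemma index_tensor_vec_pair:
  assumes "i < dim_vec \<phi>" "j < dim_vec \<psi>"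
  shows "tensor_vec \<phi> \<psi> $ (i * dim_vec \<psi> + j) = \<phi> $ i * \<psi> $ j"
proof -
  have "i * dim_vec \<psi> + j < dim_vec \<phi> * dim_vec \<psi>" using assms by (rule pair_index_less)
  then show ?thesis using assms(2) unfolding tensor_vec_def by (simp add: pair_index_div_mod)
qed

lemma dim_tensor_vec [simp]: "dim_vec (tensor_vec \<phi> \<psi>) = dim_vec \<phi> * dim_vec \<psi>"
  unfolding tensor_vec_def by (rule dim_vec)

lemma tensor_vec_carrier:
  "\<phi> \<in> carrier_vec d \<Longrightarrow> \<psi> \<in> carrier_vec e \<Longrightarrow> tensor_vec \<phi> \<psi> \<in> carrier_vec (d*e)"
  by (intro carrier_vecI) simp

lemma cscalar_prod_tensor_vec:
  assumes "dim_vec \<phi>' = dim_vec \<phi>" "dim_vec \<psi>' = dim_vec \<psi>"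
  shows "tensor_vec \<phi> \<psi> \<bullet>c tensor_vec \<phi>' \<psi>' = (\<phi> \<bullet>c \<phi>') * (\<psi> \<bullet>c \<psi>')"
proof -
  have "tensor_vec \<phi> \<psi> \<bullet>c tensor_vec \<phi>' \<psi>' =
      (\<Sum>i<dim_vec \<phi>. \<Sum>j<dim_vec \<psi>. (\<phi> $ i * cnj (\<phi>' $ i)) * (\<psi> $ j * cnj (\<psi>' $ j)))"
    unfolding scalar_prod_def dim_vec_conjugate dim_tensor_vec atLeast0LessThan assms
      sum_lessThan_mult_pairs
    using assms
    by (intro sum.cong refl)
      (simp add: index_tensor_vec_pair index_tensor_vec_pair[of _ \<phi>' _ \<psi>', unfolded assms]
        pair_index_less)
  also have "\<dots> = (\<phi> \<bullet>c \<phi>') * (\<psi> \<bullet>c \<psi>')"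
    using assms by (simp add: scalar_prod_def atLeast0LessThan sum_product)
  finally show ?thesis .
qed

lemma unit_vec_in_tensor_vec:
  assumes "unit_vec_in d \<phi>" "unit_vec_in e \<psi>"
  shows "unit_vec_in (d*e) (tensor_vec \<phi> \<psi>)"
  using assms unfolding unit_vec_in_def by (simp add: tensor_vec_carrier cscalar_prod_tensor_vec)

lemma unit_vec_in_unit_vec: "i < d \<Longrightarrow> unit_vec_in d (unit_vec d i)"
  by (simp add: unit_vec_in_def)

lemma tensor_vec_unit_vec:
  assumes "i < d" "j < e"
  shows "tensor_vec (unit_vec d i) (unit_vec e j) = unit_vec (d*e) (i*e+j)"
proof (rule eq_vecI)
  fix k assume "k < dim_vec (unit_vec (d*e) (i*e+j))"
  then have k: "k < d*e" by simp
  then have "0 < e" by (cases e) auto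
  with k have "k div e < d" "k mod e < e"
    by (simp_all add: less_mult_imp_div_less)
  moreover have "k = i*e+j \<longleftrightarrow> k div e = i \<and> k mod e = j"
    using assms div_mult_mod_eq[of k e] by (auto simp: pair_index_div_mod)
  ultimately show "tensor_vec (unit_vec d i) (unit_vec e j) $ k = unit_vec (d*e) (i*e+j) $ k"
    using k assms pair_index_less[OF assms] by (simp add: tensor_vec_def)
qed simp

lemma prob_proj:
  assumes "M \<in> carrier_mat D D" "v \<in> carrier_vec D"
  shows "prob M (proj v) = Re ((M *\<^sub>v v) \<bullet>c v)"
proof -
  have "mtrace (M * proj v) = (\<Sum>i<D. (\<Sum>k<D. M $$ (i,k) * v $ k) * cnj (v $ i))"
    using assms
    by (auto simp: mtrace_def proj_def scalar_prod_def row_def col_def atLeast0LessThan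
        sum_distrib_right mult.assoc intro!: sum.cong)
  also have "\<dots> = (M *\<^sub>v v) \<bullet>c v"
    using assms by (auto simp: scalar_prod_def row_def atLeast0LessThan intro!: sum.cong)
  finally show ?thesis by (simp add: prob_def)
qed

lemma conjugate_unit_vec: "conjugate (unit_vec n k :: complex vec) = unit_vec n k"
  by (rule eq_vecI) (simp_all add: unit_vec_def)

lemma prob_proj_unit_vec:
  assumes "M \<in> carrier_mat D D" "k < D"
  shows "prob M (proj (unit_vec D k)) = Re (M $$ (k,k))"
  using assms by (simp add: prob_proj conjugate_unit_vec)

lemma psd_prob_proj_nonneg: "psd D M \<Longrightarrow> v \<in> carrier_vec D \<Longrightarrow> 0 \<le> prob M (proj v)"
  by (auto simp: psd_def prob_proj)

lemma povm2_swap: "povm2 D M0 M1 \<Longrightarrow> povm2 D M1 M0"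
  unfolding povm2_def psd_def by (metis comm_add_mat)

lemma povm2_prob_proj_add:
  assumes "povm2 D M0 M1" "unit_vec_in D v"
  shows "prob M0 (proj v) + prob M1 (proj v) = 1"
proof -
  have M: "M0 \<in> carrier_mat D D" "M1 \<in> carrier_mat D D" "M0 + M1 = 1\<^sub>m D"
    using assms(1) by (auto simp: povm2_def psd_def)
  have v: "v \<in> carrier_vec D" "v \<bullet>c v = 1"
    using assms(2) by (auto simp: unit_vec_in_def)
  have "(M0 *\<^sub>v v) \<bullet>c v + (M1 *\<^sub>v v) \<bullet>c v = (M0 *\<^sub>v v + M1 *\<^sub>v v) \<bullet>c v"
    using M(1,2) v(1) by (simp add: add_scalar_prod_distrib[of _ D])
  also have "\<dots> = ((M0 + M1) *\<^sub>v v) \<bullet>c v"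
    using M(1,2) v(1) by (simp add: add_mult_distrib_mat_vec)
  also have "\<dots> = 1"
    using M v by simp
  finally show ?thesis
    using M v by (simp add: prob_proj flip: plus_complex.sel(1))
qed

lemma povm2_prob_proj_le_1:
  assumes "povm2 D M0 M1" "unit_vec_in D v"
  shows "prob M0 (proj v) \<le> 1"
  using povm2_prob_proj_add[OF assms] psd_prob_proj_nonneg[of D M1 v] assms
  by (auto simp: povm2_def unit_vec_in_def)

lemma bdd_above_prob_pure_states:
  assumes "povm2 D M0 M1" "S \<subseteq> {proj v | v. unit_vec_in D v}"
  shows "bdd_above (prob M0 ` S)"
  using assms povm2_prob_proj_le_1[OF assms(1)] by (intro bdd_aboveI[of _ 1]) auto

lemma unit_vec_in_sum_cmod_sq:
  assumes "unit_vec_in d \<phi>"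
  shows "(\<Sum>i<d. (cmod (\<phi> $ i))\<^sup>2) = 1"
proof -
  have "complex_of_real (\<Sum>i<d. (cmod (\<phi> $ i))\<^sup>2) = (\<Sum>i<d. \<phi> $ i * cnj (\<phi> $ i))"
    unfolding of_real_sum by (intro sum.cong refl) (rule complex_norm_square)
  also have "\<dots> = \<phi> \<bullet>c \<phi>"
    using assms by (auto simp: unit_vec_in_def scalar_prod_def atLeast0LessThan dest: carrier_vecD)
  also have "\<dots> = 1"
    using assms by (simp add: unit_vec_in_def)
  finally show ?thesis
    by (metis of_real_eq_1_iff)
qed

lemma unit_vec_in_sum_cmod_mult_le_1:
  assumes "unit_vec_in d \<phi>" "unit_vec_in d \<psi>"
  shows "(\<Sum>i<d. cmod (\<phi> $ i) * cmod (\<psi> $ i)) \<le> 1"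
proof -
  have "x * y \<le> (x\<^sup>2 + y\<^sup>2) / 2" for x y :: real
    using sum_squares_bound[of x y] by simp
  then have "(\<Sum>i<d. cmod (\<phi> $ i) * cmod (\<psi> $ i))
      \<le> (\<Sum>i<d. ((cmod (\<phi> $ i))\<^sup>2 + (cmod (\<psi> $ i))\<^sup>2) / 2)"
    by (intro sum_mono)
  also have "\<dots> = 1"
    using unit_vec_in_sum_cmod_sq[OF assms(1)] unit_vec_in_sum_cmod_sq[OF assms(2)]
    by (simp add: sum.distrib flip: sum_divide_distrib)
  finally show ?thesis .
qed

lemma cmod_cscalar_prod_tensor_diag_vec_le:
  assumes "unit_vec_in d \<phi>" "unit_vec_in d \<psi>" and a: "\<forall>i<d. cmod (a i) \<le> c"
  shows "cmod (tensor_vec \<phi> \<psi> \<bullet>c diag_vec d a) \<le> c"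
proof -
  have \<phi>: "\<phi> \<in> carrier_vec d" and \<psi>: "\<psi> \<in> carrier_vec d"
    using assms by (auto simp: unit_vec_in_def)
  have "0 < d"
    using unit_vec_in_sum_cmod_sq[OF assms(1)] by (cases d) auto
  with a have "0 \<le> c"
    using norm_ge_zero order_trans by blast
  have "tensor_vec \<phi> \<psi> \<bullet>c diag_vec d a = (\<Sum>i<d. \<phi> $ i * \<psi> $ i * cnj (a i))"
    using \<phi> \<psi> index_tensor_vec_pair[of _ \<phi> _ \<psi>]
    by (simp add: cscalar_prod_diag_vec tensor_vec_carrier)
  then have "cmod (tensor_vec \<phi> \<psi> \<bullet>c diag_vec d a)
      \<le> (\<Sum>i<d. cmod (\<phi> $ i) * cmod (\<psi> $ i) * cmod (a i))"
    by (simp add: norm_mult norm_sum[THEN order_trans])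
  also have "\<dots> \<le> (\<Sum>i<d. cmod (\<phi> $ i) * cmod (\<psi> $ i)) * c"
    using a by (auto simp: sum_distrib_right intro!: sum_mono mult_left_mono)
  also have "\<dots> \<le> c"
    using unit_vec_in_sum_cmod_mult_le_1[OF assms(1,2)] \<open>0 \<le> c\<close>
    by (intro mult_left_le_one_le) (auto intro: sum_nonneg)
  finally show ?thesis .
qed

lemma max_prod_fidelity_diag_vec_le:
  assumes "\<forall>i<qdim n. cmod (a i) \<le> c"
  shows "max_prod_fidelity n (diag_vec (qdim n) a) \<le> c"
  unfolding max_prod_fidelity_def
proof (rule cSup_least)
  have "unit_vec_in (qdim n) (unit_vec (qdim n) 0)"
    by (simp add: unit_vec_in_unit_vec qdim_def)
  then show "{pure_fidelity (diag_vec (qdim n) a) (tensor_vec \<phi> \<psi>) | \<phi> \<psi>.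
      unit_vec_in (qdim n) \<phi> \<and> unit_vec_in (qdim n) \<psi>} \<noteq> {}"
    by blast
qed (auto simp: pure_fidelity_def intro!: cmod_cscalar_prod_tensor_diag_vec_le[OF _ _ assms])

lemma exists_signs_diag_le_quadratic_form:
  fixes H :: "nat \<Rightarrow> nat \<Rightarrow> real"
  shows "\<exists>s. (\<forall>i. \<bar>s i\<bar> = 1) \<and> (\<Sum>i<m. H i i) \<le> (\<Sum>i<m. \<Sum>j<m. s i * s j * H i j)"
proof (induction m)
  case 0
  show ?case by (rule exI[of _ "\<lambda>_. 1"]) simp
next
  case (Suc m)
  then obtain s where s: "\<forall>i. \<bar>s i\<bar> = 1"
    and IH: "(\<Sum>i<m. H i i) \<le> (\<Sum>i<m. \<Sum>j<m. s i * s j * H i j)" by blast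
  define t where "t = (\<Sum>j<m. s j * (H m j + H j m))"
  \<comment> \<open>choose the new sign so that the new cross terms \<open>c * t\<close> are nonnegative\<close>
  define c :: real where "c = (if t \<ge> 0 then 1 else -1)"
  define s' where "s' = s(m := c)"
  have "(\<Sum>i<Suc m. \<Sum>j<Suc m. s' i * s' j * H i j)
      = (\<Sum>i<m. \<Sum>j<m. s i * s j * H i j) + c * t + c * c * H m m"
    by (simp add: s'_def t_def sum.distrib sum_distrib_left algebra_simps)
  moreover have "c * c = 1" "0 \<le> c * t"
    by (simp_all add: c_def)
  ultimately have "(\<Sum>i<Suc m. H i i) \<le> (\<Sum>i<Suc m. \<Sum>j<Suc m. s' i * s' j * H i j)"
    using IH by simp
  moreover have "\<forall>i. \<bar>s' i\<bar> = 1"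
    using s by (simp add: s'_def c_def)
  ultimately show ?case by blast
qed

definition signed_max_entangled :: "nat \<Rightarrow> (nat \<Rightarrow> real) \<Rightarrow> complex vec" where
  "signed_max_entangled d s = diag_vec d (\<lambda>i. complex_of_real (s i / sqrt d))"

lemma unit_vec_in_signed_max_entangled:
  assumes "0 < d" "\<forall>i<d. \<bar>s i\<bar> = 1"
  shows "unit_vec_in (d*d) (signed_max_entangled d s)"
proof -
  have "s i / sqrt d * (s i / sqrt d) = 1 / d" if "i < d" for i
    using assms that abs_mult_self_eq[of "s i"] by (simp add: field_simps)
  then have "signed_max_entangled d s \<bullet>c signed_max_entangled d s = (\<Sum>i<d. 1 / d)"
    unfolding signed_max_entangled_def
    by (simp add: cscalar_prod_diag_vec index_diag_vec_pair flip: of_real_mult)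
  then show ?thesis
    using assms by (simp add: unit_vec_in_def signed_max_entangled_def)
qed

lemma prob_proj_signed_max_entangled:
  assumes "M \<in> carrier_mat (d*d) (d*d)"
  shows "prob M (proj (signed_max_entangled d s)) =
    (\<Sum>i<d. \<Sum>j<d. s i * s j * Re (M $$ (i*d+i, j*d+j))) / d"
  using assms
  by (simp add: prob_proj signed_max_entangled_def quadratic_form_diag_vec sum_divide_distrib
      Re_sum mult_ac)

lemma inverse_sqrt_qdim: "1 / sqrt (real (qdim n)) = 2 powr (- real n / 2)"
  by (simp add: qdim_def powr_minus_divide powr_half_sqrt[symmetric] powr_realpow[symmetric] powr_powr)

lemma signed_max_entangled_in_H1:
  assumes "\<forall>i<qdim n. \<bar>s i\<bar> = 1" "\<epsilon> \<le> 1 - 2 powr (- real n / 2)"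
  shows "proj (signed_max_entangled (qdim n) s) \<in> H1 n \<epsilon>"
proof -
  have "max_prod_fidelity n (signed_max_entangled (qdim n) s) \<le> 1 / sqrt (qdim n)"
    unfolding signed_max_entangled_def
    using assms(1) by (intro max_prod_fidelity_diag_vec_le) (simp add: norm_divide)
  then have "max_prod_fidelity n (signed_max_entangled (qdim n) s) \<le> 1 - \<epsilon>"
    using assms(2) by (simp add: inverse_sqrt_qdim)
  moreover have "unit_vec_in (qdim n * qdim n) (signed_max_entangled (qdim n) s)"
    using assms(1) by (intro unit_vec_in_signed_max_entangled) (simp_all add: qdim_def)
  ultimately show ?thesis
    by (auto simp: H1_def)
qed

lemma H0_subset_pure_states: "H0 n \<subseteq> {proj v | v. unit_vec_in (qdim n * qdim n) v}"
  by (auto simp: H0_def intro: unit_vec_in_tensor_vec)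

lemma H1_subset_pure_states: "H1 n \<epsilon> \<subseteq> {proj v | v. unit_vec_in (qdim n * qdim n) v}"
  by (auto simp: H1_def)

lemma povm2_diag_ge_1_minus_sup_H0:
  assumes "povm2 (qdim n * qdim n) M0 M1" "i < qdim n"
  shows "1 - (SUP \<rho>\<in>H0 n. prob M1 \<rho>) \<le> Re (M0 $$ (i * qdim n + i, i * qdim n + i))"
proof -
  let ?k = "i * qdim n + i"
  have k: "?k < qdim n * qdim n"
    using pair_index_less[OF assms(2) assms(2)] .
  have "proj (tensor_vec (unit_vec (qdim n) i) (unit_vec (qdim n) i)) \<in> H0 n"
    using unit_vec_in_unit_vec[OF assms(2)] unfolding H0_def by blast
  then have "proj (unit_vec (qdim n * qdim n) ?k) \<in> H0 n"
    by (simp only: tensor_vec_unit_vec[OF assms(2) assms(2)])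
  then have "prob M1 (proj (unit_vec (qdim n * qdim n) ?k)) \<le> (SUP \<rho>\<in>H0 n. prob M1 \<rho>)"
    using bdd_above_prob_pure_states[OF povm2_swap[OF assms(1)] H0_subset_pure_states]
    by (rule cSUP_upper)
  moreover have "M0 \<in> carrier_mat (qdim n * qdim n) (qdim n * qdim n)"
    using assms(1) by (simp add: povm2_def psd_def)
  ultimately show ?thesis
    using povm2_prob_proj_add[OF assms(1) unit_vec_in_unit_vec[OF k]] k
    by (simp add: prob_proj_unit_vec)
qed

theorem corollary6p2:
  fixes n :: nat and \<epsilon> :: real and M0 M1 :: "complex mat"
  assumes "0 \<le> \<epsilon>" and "\<epsilon> \<le> 1 - 2 powr (- real n / 2)"
    and "povm2 (qdim n * qdim n) M0 M1"
  shows "(SUP \<rho>\<in>H0 n. prob M1 \<rho>) + (SUP \<rho>\<in>H1 n \<epsilon>. prob M0 \<rho>) \<ge> 1"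
proof -
  define d where "d = qdim n"
  define A where "A = (SUP \<rho>\<in>H0 n. prob M1 \<rho>)"
  have "0 < d" by (simp add: d_def qdim_def)
  have M0: "M0 \<in> carrier_mat (d*d) (d*d)"
    using assms(3) by (simp add: d_def povm2_def psd_def)
  obtain s where s: "\<forall>i. \<bar>s i\<bar> = 1" and signs:
    "(\<Sum>i<d. Re (M0 $$ (i*d+i, i*d+i))) \<le> (\<Sum>i<d. \<Sum>j<d. s i * s j * Re (M0 $$ (i*d+i, j*d+j)))"
    using exists_signs_diag_le_quadratic_form[where H = "\<lambda>i j. Re (M0 $$ (i*d+i, j*d+j))"]
    by blast
  have "real d * (1 - A) \<le> (\<Sum>i<d. Re (M0 $$ (i*d+i, i*d+i)))"
    using sum_mono[of "{..<d}" "\<lambda>_. 1 - A"] povm2_diag_ge_1_minus_sup_H0[OF assms(3)]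
    by (simp add: A_def d_def)
  also note signs
  also have "(\<Sum>i<d. \<Sum>j<d. s i * s j * Re (M0 $$ (i*d+i, j*d+j))) =
      real d * prob M0 (proj (signed_max_entangled d s))"
    using \<open>0 < d\<close> by (simp add: prob_proj_signed_max_entangled[OF M0])
  finally have "1 - A \<le> prob M0 (proj (signed_max_entangled d s))"
    using \<open>0 < d\<close> by simp
  also have "\<dots> \<le> (SUP \<rho>\<in>H1 n \<epsilon>. prob M0 \<rho>)"
    using signed_max_entangled_in_H1[OF _ assms(2)] s
      bdd_above_prob_pure_states[OF assms(3) H1_subset_pure_states]
    by (auto simp: d_def intro: cSUP_upper)
  finally show ?thesis by (simp add: A_def)
qed

end
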